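(* Let $P$ be a finite Eulerian poset, i.e. a graded poset with unique minimum $\hat{0}$ and unique maximum $\hat{1}$ whose Möbius function satisfies $\mu(x,y)=(-1)^{\operatorname{rk}(y)-\operatorname{rk}(x)}$ for all $x\le y$, endowed with its rank function $\operatorname{rk}$, and let $n=\operatorname{rk}(\hat{1})$. Write $\mathsf{Z}=\mathsf{Z}_{P,\operatorname{rk}}$ and let $\mathsf{Z}|_{q=1/q}$ denote the polynomial obtained from $\mathsf{Z}$ by replacing $q$ by $1/q$ in its coefficients. Then $$\mathsf{Z}(x)=(-q)^{-n}\,\mathsf{Z}|_{q=1/q}(-qx).$$
   Context: $q$ is an indeterminate; for $n\in\mathbb{Z}$, $[n]_q=(q^n-1)/(q-1)$. For a finite poset $P$, a height function is a map $h:P\to\mathbb{N}$ with $h(x)<h(y)$ whenever $y$ covers $x$. For a graded poset, $\operatorname{rk}$ denotes the height function increasing by exactly $1$ along every cover relation with minimum value $0$ on each connected component. For $k\ge1$, $\operatorname{Ch}_k(P)$ is the set of strict chains $c_1<\cdots<c_k$ in $P$. For a tuple $a=(a_1,\dots,a_k)$ of distinct nonnegative integers, $\mathsf{E}_a\in\mathbb{Q}(q)[x]$ is the unique polynomial with $\mathsf{E}_a([n]_q)=\sum_{m\in\mathbb{N}^k,\ \sum m_i=n}q^{\sum a_im_i}$ for all $n\ge0$. The $q$-Zeta polynomial of $(P,h)$ is $\mathsf{Z}_{P,h}(x)=\sum_{k\ge1}\sum_{c\in\operatorname{Ch}_k(P)}q^{\sum_i h(c_i)}\,\mathsf{E}_{(h(c_1),\dots,h(c_k))}\big((x-[k+1]_q)/q^{k+1}\big)\in\mathbb{Q}(q)[x]$;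 it is the unique polynomial with $\mathsf{Z}_{P,h}([m]_q)=\sum_{e_1\le\cdots\le e_{m-1}\text{ in }P}q^{h(e_1)+\cdots+h(e_{m-1})}$ for all integers $m\ge2$. *)

theory Defs
  imports "HOL-Computational_Algebra.Polynomial" "HOL-Computational_Algebra.Fraction_Field"
begin

type_synonym qfield = "rat poly fract"

definition qq :: qfield where
  "qq = Fract [:0, 1:] 1"

definition qint :: "nat \<Rightarrow> qfield" where
  "qint n = (qq ^ n - 1) / (qq - 1)"

text \<open>Substitution q := 1/q, an automorphism of Q(q): a fraction a(q)/b(q) is sent to
  a(1/q)/b(1/q) (independent of the chosen representative).\<close>
definition eval_at_qinv :: "rat poly \<Rightarrow> qfield" where
  "eval_at_qinv a = poly (map_poly (\<lambda>c. Fract [:c:] 1) a) (inverse qq)"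

definition qinv_subst :: "qfield \<Rightarrow> qfield" where
  "qinv_subst x = (SOME y. \<exists>a b. b \<noteq> 0 \<and> x = Fract a b \<and>
                              y = eval_at_qinv a / eval_at_qinv b)"

definition Epoly :: "nat list \<Rightarrow> qfield poly" where
  "Epoly a = (THE p. \<forall>n. poly p (qint n) =
      (\<Sum>m\<in>{m :: nat list. length m = length a \<and> sum_list m = n}.
          qq ^ (\<Sum>i<length a. a ! i * m ! i)))"

definition partial_order_on' :: "'a set \<Rightarrow> ('a \<Rightarrow> 'a \<Rightarrow> bool) \<Rightarrow> bool" where
  "partial_order_on' P le \<longleftrightarrow>
     (\<forall>x\<in>P. le x x) \<and>
     (\<forall>x\<in>P. \<forall>y\<in>P. le x y \<and> le y x \<longrightarrow> x = y) \<and>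
     (\<forall>x\<in>P. \<forall>y\<in>P. \<forall>z\<in>P. le x y \<and> le y z \<longrightarrow> le x z)"

definition covers :: "'a set \<Rightarrow> ('a \<Rightarrow> 'a \<Rightarrow> bool) \<Rightarrow> 'a \<Rightarrow> 'a \<Rightarrow> bool" where
  "covers P le x y \<longleftrightarrow> x \<in> P \<and> y \<in> P \<and> le x y \<and> x \<noteq> y \<and>
     \<not> (\<exists>z\<in>P. le x z \<and> le z y \<and> z \<noteq> x \<and> z \<noteq> y)"

definition pchains :: "'a set \<Rightarrow> ('a \<Rightarrow> 'a \<Rightarrow> bool) \<Rightarrow> nat \<Rightarrow> 'a list set" where
  "pchains P le k = {c. length c = k \<and> set c \<subseteq> P \<and>
      (\<forall>i j. i < j \<and> j < k \<longrightarrow> le (c ! i) (c ! j) \<and> c ! i \<noteq> c ! j)}"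

definition qZeta :: "'a set \<Rightarrow> ('a \<Rightarrow> 'a \<Rightarrow> bool) \<Rightarrow> ('a \<Rightarrow> nat) \<Rightarrow> qfield poly" where
  "qZeta P le h = (\<Sum>k\<in>{1..card P}. \<Sum>c\<in>pchains P le k.
      smult (qq ^ (\<Sum>i<k. h (c ! i)))
        (pcompose (Epoly (map h c))
           [: - qint (k + 1) / qq ^ (k + 1), 1 / qq ^ (k + 1) :]))"

definition mobius :: "'a set \<Rightarrow> ('a \<Rightarrow> 'a \<Rightarrow> bool) \<Rightarrow> 'a \<Rightarrow> 'a \<Rightarrow> int" where
  "mobius P le = (THE f.
      (\<forall>x\<in>P. \<forall>y\<in>P. le x y \<longrightarrow>
          (\<Sum>z\<in>{z\<in>P. le x z \<and> le z y}. f x z) = (if x = y then 1 else 0)) \<and>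
      (\<forall>x y. \<not> (x \<in> P \<and> y \<in> P \<and> le x y) \<longrightarrow> f x y = 0))"

definition eulerian :: "'a set \<Rightarrow> ('a \<Rightarrow> 'a \<Rightarrow> bool) \<Rightarrow> 'a \<Rightarrow> 'a \<Rightarrow> ('a \<Rightarrow> nat) \<Rightarrow> bool" where
  "eulerian P le zhat ohat rk \<longleftrightarrow>
     finite P \<and> partial_order_on' P le \<and>
     zhat \<in> P \<and> ohat \<in> P \<and> (\<forall>x\<in>P. le zhat x \<and> le x ohat) \<and>
     rk zhat = 0 \<and> (\<forall>x y. covers P le x y \<longrightarrow> rk y = rk x + 1) \<and>
     (\<forall>x\<in>P. \<forall>y\<in>P. le x y \<longrightarrow> mobius P le x y = (-1) ^ (rk y - rk x))"

end

theory Submission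
  imports Defs
begin

text \<open>
  Let \<open>A\<close> be the operator \<open>(A v) x = sum_{z >= x} q^(rk z) v z\<close> on functions \<open>P -> Q(q)\<close>, and
  \<open>delta\<close> the indicator of \<open>1hat\<close>. Splitting multichains according to their underlying strict
  chains identifies \<open>Z([m]_q)\<close> with \<open>q^(-n) (A^m delta)(0hat)\<close>. As \<open>A\<close> is triangular with respect
  to the rank, with eigenvalue \<open>q^(rk x)\<close> at \<open>x\<close>, \<open>delta\<close> is a sum of eigenfunctions for the
  eigenvalues \<open>q^d\<close>, \<open>d <= n\<close>; hence \<open>(A^m delta)(0hat) = W(q^m)\<close> for a polynomial \<open>W\<close>, and
  \<open>Z(x) = q^(-n) W(1 + (q - 1) x)\<close>.

  By the Eulerian condition on the Moebius function,
  \<open>(B v) x = (-q)^(-rk x) sum_{z >= x} (-1)^(rk z) v z\<close> is a left inverse of \<open>A\<close>. So the values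
  of \<open>Z\<close> at the q-integers \<open>[-m]_q\<close> are \<open>q^(-n) W(q^(-m)) = q^(-n) (B^m delta)(0hat)\<close>. Finally,
  conjugating \<open>B\<close> by \<open>v z \<mapsto> v z / (-q)^(rk z)\<close> and substituting \<open>q \<mapsto> 1/q\<close> turns it into
  \<open>A\<close>; since \<open>q \<mapsto> 1/q\<close> sends \<open>[-m]_q\<close> to \<open>-q [m]_q\<close>, comparing both sides at \<open>x = [m]_q\<close>
  gives the reciprocity.
\<close>

section \<open>The substitution q \<mapsto> 1/q\<close>

lemma of_int_fract: "(of_int k :: 'a::idom fract) = Fract (of_int k) 1"
  unfolding of_int_of_nat by (simp add: of_nat_fract)

lemma Fract_const_eq_of_rat: "Fract [:c:] 1 = (of_rat c :: qfield)"
proof (cases c)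
  case (Fract a b)
  then have "Fract [:c:] 1 = Fract [:of_int a:] [:of_int b:]"
    by (simp add: eq_fract Fract_of_int_quotient)
  also have "\<dots> = of_rat c"
    using Fract by (simp add: of_rat_rat of_int_fract of_int_poly)
  finally show ?thesis .
qed

lemma qq_nonzero [simp]: "qq \<noteq> 0"
  by (simp add: qq_def Zero_fract_def eq_fract)

lemma qq_neq_1 [simp]: "qq \<noteq> 1"
  by (simp add: qq_def One_fract_def eq_fract one_pCons)

lemma qq_power: "qq ^ n = Fract ([:0, 1:] ^ n) 1"
  by (induction n) (simp_all add: qq_def fract_collapse)

lemma qq_power_inject [simp]: "qq ^ a = qq ^ b \<longleftrightarrow> a = b"
proof
  assume "qq ^ a = qq ^ b"
  then have "([:0, 1:] ^ a :: rat poly) = [:0, 1:] ^ b"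
    by (simp add: qq_power eq_fract)
  then show "a = b"
    by (metis degree_linear_power)
qed simp

lemma poly_map_of_rat_qq: "poly (map_poly of_rat r) qq = Fract r 1"
proof (induction r)
  case (pCons a p)
  have "poly (map_poly of_rat (pCons a p)) qq = of_rat a + qq * Fract p 1"
    using pCons.IH by (simp add: map_poly_pCons)
  also have "\<dots> = Fract (pCons a p) 1"
    by (simp add: qq_def Fract_const_eq_of_rat[symmetric])
  finally show ?case .
qed (simp add: Zero_fract_def)

lemma eval_at_qinv_altdef: "eval_at_qinv a = poly (map_poly of_rat a) (inverse qq)"
  by (simp add: eval_at_qinv_def Fract_const_eq_of_rat)

lemma eval_at_qinv_0 [simp]: "eval_at_qinv 0 = 0"
  by (simp add: eval_at_qinv_altdef)

lemma eval_at_qinv_pCons: "eval_at_qinv (pCons c p) = of_rat c + inverse qq * eval_at_qinv p"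
  by (simp add: eval_at_qinv_altdef map_poly_pCons)

lemma eval_at_qinv_add: "eval_at_qinv (a + b) = eval_at_qinv a + eval_at_qinv b"
proof (induction a arbitrary: b)
  case (pCons c p)
  then show ?case
    by (cases b) (simp add: eval_at_qinv_pCons of_rat_add algebra_simps)
qed simp

lemma eval_at_qinv_smult: "eval_at_qinv (smult c b) = of_rat c * eval_at_qinv b"
  by (induction b) (simp_all add: eval_at_qinv_pCons of_rat_mult algebra_simps)

lemma eval_at_qinv_mult: "eval_at_qinv (a * b) = eval_at_qinv a * eval_at_qinv b"
  by (induction a) (simp_all add: eval_at_qinv_add eval_at_qinv_smult eval_at_qinv_pCons
      algebra_simps)

lemma eval_at_qinv_nonzero:
  assumes "b \<noteq> 0"
  shows "eval_at_qinv b \<noteq> 0"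
proof
  assume "eval_at_qinv b = 0"
  then have "poly (reflect_poly (map_poly of_rat b)) qq = 0"
    by (simp add: poly_reflect_poly_nz eval_at_qinv_altdef)
  moreover have "reflect_poly (map_poly of_rat b) = map_poly (of_rat :: rat \<Rightarrow> qfield) (reflect_poly b)"
    by (intro poly_eqI) (simp add: coeff_reflect_poly coeff_map_poly degree_map_poly)
  ultimately have "Fract (reflect_poly b) 1 = 0"
    by (simp add: poly_map_of_rat_qq)
  with assms show False
    by (simp add: Zero_fract_def eq_fract)
qed

lemma qinv_subst_Fract:
  assumes "b \<noteq> 0"
  shows "qinv_subst (Fract a b) = eval_at_qinv a / eval_at_qinv b"
proof -
  let ?R = "\<lambda>y. \<exists>a' b'. b' \<noteq> 0 \<and> Fract a b = Fract a' b' \<and> y = eval_at_qinv a' / eval_at_qinv b'"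
  have "?R (qinv_subst (Fract a b))"
    unfolding qinv_subst_def by (rule someI_ex) (use assms in blast)
  then obtain a' b' where b': "b' \<noteq> 0" "Fract a b = Fract a' b'"
    and eq: "qinv_subst (Fract a b) = eval_at_qinv a' / eval_at_qinv b'"
    by blast
  from b' assms have "eval_at_qinv a * eval_at_qinv b' = eval_at_qinv a' * eval_at_qinv b"
    by (simp add: eq_fract flip: eval_at_qinv_mult)
  then show ?thesis
    unfolding eq using eval_at_qinv_nonzero assms b'(1) by (simp add: frac_eq_eq)
qed

lemma qinv_subst_add: "qinv_subst (x + y) = qinv_subst x + qinv_subst y"
  and qinv_subst_mult: "qinv_subst (x * y) = qinv_subst x * qinv_subst y"
  by (cases x; cases y; simp add: qinv_subst_Fract eval_at_qinv_add eval_at_qinv_mult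
      eval_at_qinv_nonzero field_simps)+

lemma qinv_subst_0 [simp]: "qinv_subst 0 = 0"
  and qinv_subst_1 [simp]: "qinv_subst 1 = 1"
  by (simp_all add: Zero_fract_def One_fract_def qinv_subst_Fract eval_at_qinv_altdef)

lemma qinv_subst_minus: "qinv_subst (- x) = - qinv_subst x"
  using qinv_subst_add[of x "- x"] by (simp add: eq_neg_iff_add_eq_0)

lemma qinv_subst_diff: "qinv_subst (x - y) = qinv_subst x - qinv_subst y"
  using qinv_subst_add[of x "- y"] by (simp add: qinv_subst_minus)

lemma qinv_subst_inverse: "qinv_subst (inverse x) = inverse (qinv_subst x)"
proof (cases "x = 0")
  case False
  then have "qinv_subst x * qinv_subst (inverse x) = 1"
    by (simp flip: qinv_subst_mult)
  then show ?thesis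
    by (simp add: inverse_unique)
qed simp

lemma qinv_subst_divide: "qinv_subst (x / y) = qinv_subst x / qinv_subst y"
  by (simp add: divide_inverse qinv_subst_mult qinv_subst_inverse)

lemma qinv_subst_power: "qinv_subst (x ^ n) = qinv_subst x ^ n"
  by (induction n) (simp_all add: qinv_subst_mult)

lemma qinv_subst_sum: "qinv_subst (sum f A) = (\<Sum>a\<in>A. qinv_subst (f a))"
  by (induction A rule: infinite_finite_induct) (simp_all add: qinv_subst_add)

lemma qinv_subst_qq: "qinv_subst qq = inverse qq"
  by (simp add: qq_def qinv_subst_Fract eval_at_qinv_altdef map_poly_pCons)

lemma poly_map_poly_qinv_subst:
  "poly (map_poly qinv_subst p) (qinv_subst x) = qinv_subst (poly p x)"
  by (induction p) (simp_all add: map_poly_pCons qinv_subst_add qinv_subst_mult)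

section \<open>q-integers and the polynomials E_a\<close>

lemma qint_altdef: "1 + (qq - 1) * qint m = qq ^ m"
  by (simp add: qint_def)

lemma poly_qint_altdef: "poly [:1, qq - 1:] (qint m) = qq ^ m"
  by (simp add: qint_def)

lemma qint_inject: "qint a = qint b \<longleftrightarrow> a = b"
  by (metis qint_altdef qq_power_inject)

lemma qint_diff_divide:
  assumes "k \<le> m"
  shows "(qint m - qint k) / qq ^ k = qint (m - k)"
proof -
  from assms have "qq ^ m = qq ^ k * qq ^ (m - k)"
    by (simp flip: power_add)
  then have "qint m - qint k = qq ^ k * qint (m - k)"
    unfolding qint_def by (simp add: diff_divide_distrib[symmetric] algebra_simps)
  then show ?thesis
    by simp
qed

definition neg_qint :: "nat \<Rightarrow> qfield" where
  "neg_qint m = (inverse qq ^ m - 1) / (qq - 1)"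

lemma poly_neg_qint_altdef: "poly [:1, qq - 1:] (neg_qint m) = inverse qq ^ m"
  by (simp add: neg_qint_def)

lemma qinv_subst_neg_qint: "qinv_subst (neg_qint m) = - qq * qint m"
proof -
  have "inverse qq - 1 \<noteq> 0"
    by simp
  have "qinv_subst (neg_qint m) = (qq ^ m - 1) / (inverse qq - 1)"
    by (simp add: neg_qint_def qinv_subst_divide qinv_subst_diff qinv_subst_power qinv_subst_inverse
        qinv_subst_qq)
  also have "\<dots> = - qq * qint m"
    using \<open>inverse qq - 1 \<noteq> 0\<close> by (simp add: qint_def field_simps)
  finally show ?thesis .
qed

lemma poly_eqI_qint:
  fixes p r :: "qfield poly"
  assumes "\<And>m. M \<le> m \<Longrightarrow> poly p (qint m) = poly r (qint m)"
  shows "p = r"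
proof (rule ccontr)
  assume "p \<noteq> r"
  then have "finite {x. poly (p - r) x = 0}"
    by (intro poly_roots_finite) simp
  moreover have "qint ` {M..} \<subseteq> {x. poly (p - r) x = 0}"
    using assms by auto
  moreover have "infinite (qint ` {M..})"
    by (simp add: finite_image_iff inj_on_def qint_inject infinite_Ici)
  ultimately show False
    using finite_subset by blast
qed

definition composition_sum :: "nat list \<Rightarrow> nat \<Rightarrow> qfield" where
  "composition_sum a n =
     (\<Sum>m\<in>{m. length m = length a \<and> sum_list m = n}. qq ^ sum_list (map2 (*) a m))"

lemma finite_compositions: "finite {m :: nat list. length m = k \<and> sum_list m = n}"
proof (rule finite_subset)
  show "{m :: nat list. length m = k \<and> sum_list m = n} \<subseteq> {m. set m \<subseteq> {..n} \<and> length m = k}"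
    using member_le_sum_list by fastforce
qed (simp add: finite_lists_length_eq)

lemma composition_sum_0 [simp]: "composition_sum a 0 = 1"
proof -
  have C: "{m :: nat list. length m = length a \<and> sum_list m = 0} = {replicate (length a) 0}"
    by (auto intro: replicate_eqI)
  have "sum_list (map2 (*) a (replicate (length a) 0)) = 0"
    by (auto dest: set_zip_rightD)
  then show ?thesis
    by (simp add: composition_sum_def C del: sum_list_eq_0_iff)
qed

lemma composition_sum_Nil_Suc [simp]: "composition_sum [] (Suc n) = 0"
  by (simp add: composition_sum_def)

lemma composition_sum_Cons_Suc:
  "composition_sum (r # a) (Suc n) = composition_sum a (Suc n) + qq ^ r * composition_sum (r # a) n"
proof -
  let ?C = "\<lambda>k n. {m :: nat list. length m = k \<and> sum_list m = n}"
  let ?w = "\<lambda>m. qq ^ sum_list (map2 (*) (r # a) m)"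
  let ?incr = "\<lambda>m. Suc (hd m) # tl m"
  have split: "?C (Suc (length a)) (Suc n) = Cons 0 ` ?C (length a) (Suc n) \<union> ?incr ` ?C (Suc (length a)) n"
  proof (intro set_eqI iffI)
    fix m assume "m \<in> ?C (Suc (length a)) (Suc n)"
    then obtain j m' where m: "m = j # m'" "length m' = length a" "j + sum_list m' = Suc n"
      by (cases m) auto
    then show "m \<in> Cons 0 ` ?C (length a) (Suc n) \<union> ?incr ` ?C (Suc (length a)) n"
      by (cases j) (auto intro!: image_eqI[where x = "_ # m'"])
  qed (auto simp: length_Suc_conv)
  have inj: "inj_on ?incr (?C (Suc (length a)) n)"
    by (auto intro!: inj_onI simp: length_Suc_conv)
  have "composition_sum (r # a) (Suc n) =
      sum ?w (Cons 0 ` ?C (length a) (Suc n)) + sum ?w (?incr ` ?C (Suc (length a)) n)"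
    unfolding composition_sum_def length_Cons split
    by (rule sum.union_disjoint) (auto simp: finite_compositions)
  also have "sum ?w (Cons 0 ` ?C (length a) (Suc n)) = composition_sum a (Suc n)"
    by (simp add: sum.reindex composition_sum_def)
  also have "sum ?w (?incr ` ?C (Suc (length a)) n) = (\<Sum>m\<in>?C (Suc (length a)) n. qq ^ r * ?w m)"
    by (subst sum.reindex[OF inj]) (auto intro!: sum.cong simp: length_Suc_conv power_add)
  finally show ?thesis
    by (simp add: composition_sum_def sum_distrib_left)
qed

text \<open>Solving the recurrence of \<open>composition_sum_Cons_Suc\<close> term by term; distinctness of the
  exponents keeps the denominators \<open>q^d - q^c\<close> nonzero.\<close>

lemma composition_sum_exponential:
  assumes "distinct a" "a \<noteq> []"
  shows "\<exists>\<alpha>. \<forall>n. composition_sum a n = (\<Sum>d\<in>set a. \<alpha> d * (qq ^ d) ^ n)"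
  using assms
proof (induction a)
  case (Cons c a)
  obtain \<beta> where \<beta>: "\<And>n. composition_sum a (Suc n) = (\<Sum>d\<in>set a. \<beta> d * (qq ^ d) ^ Suc n)"
  proof (cases "a = []")
    case True
    then show ?thesis
      using that[of "\<lambda>_. 0"] by simp
  qed (use Cons in auto)
  have c: "c \<notin> set a"
    using Cons.prems by simp
  define \<alpha> where "\<alpha> d = (if d = c then 1 - (\<Sum>e\<in>set a. \<beta> e * qq ^ e / (qq ^ e - qq ^ c))
                       else \<beta> d * qq ^ d / (qq ^ d - qq ^ c))" for d
  have step: "\<alpha> d * (qq ^ d) ^ Suc n = \<beta> d * (qq ^ d) ^ Suc n + qq ^ c * (\<alpha> d * (qq ^ d) ^ n)"
    if "d \<in> set a" for d n
  proof -
    from that c have "qq ^ d - qq ^ c \<noteq> 0" "d \<noteq> c"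
      by auto
    then have "\<alpha> d * qq ^ d = \<beta> d * qq ^ d + qq ^ c * \<alpha> d"
      by (simp add: \<alpha>_def field_simps)
    then have "\<alpha> d * qq ^ d * (qq ^ d) ^ n = (\<beta> d * qq ^ d + qq ^ c * \<alpha> d) * (qq ^ d) ^ n"
      by simp
    then show ?thesis
      by (simp add: algebra_simps)
  qed
  have "composition_sum (c # a) n = (\<Sum>d\<in>set (c # a). \<alpha> d * (qq ^ d) ^ n)" for n
  proof (induction n)
    case 0
    have "(\<Sum>d\<in>set a. \<alpha> d) = (\<Sum>e\<in>set a. \<beta> e * qq ^ e / (qq ^ e - qq ^ c))"
      using c by (intro sum.cong) (auto simp: \<alpha>_def)
    with c show ?case
      by (simp add: \<alpha>_def)
  next
    case (Suc n)
    have "composition_sum (c # a) (Suc n) =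
        (\<Sum>d\<in>set a. \<beta> d * (qq ^ d) ^ Suc n) + qq ^ c * (\<Sum>d\<in>set (c # a). \<alpha> d * (qq ^ d) ^ n)"
      by (simp add: composition_sum_Cons_Suc \<beta> Suc.IH)
    also have "\<dots> = \<alpha> c * (qq ^ c) ^ Suc n +
        (\<Sum>d\<in>set a. \<beta> d * (qq ^ d) ^ Suc n + qq ^ c * (\<alpha> d * (qq ^ d) ^ n))"
      using c by (simp add: sum.distrib sum_distrib_left algebra_simps)
    also have "\<dots> = (\<Sum>d\<in>set (c # a). \<alpha> d * (qq ^ d) ^ Suc n)"
      using c by (simp add: step del: power_Suc)
    finally show ?case .
  qed
  then show ?case
    by blast
qed simp

lemma sum_list_map2_mult:
  "length m = length a \<Longrightarrow> sum_list (map2 (*) a m) = (\<Sum>i<length a. a ! i * m ! i)"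
  by (simp add: sum_list_sum_nth atLeast0LessThan)

lemma poly_Epoly_qint:
  assumes "distinct a" "a \<noteq> []"
  shows "poly (Epoly a) (qint n) = composition_sum a n"
proof -
  obtain \<alpha> where \<alpha>: "\<And>n. composition_sum a n = (\<Sum>d\<in>set a. \<alpha> d * (qq ^ d) ^ n)"
    using composition_sum_exponential[OF assms] by blast
  define p where "p = (\<Sum>d\<in>set a. smult (\<alpha> d) ([:1, qq - 1:] ^ d))"
  have p: "poly p (qint n) = composition_sum a n" for n
    using qint_altdef[of n] by (simp add: p_def \<alpha> poly_sum mult.commute flip: power_mult)
  have "\<exists>!p. \<forall>n. poly p (qint n) = composition_sum a n"
    using p poly_eqI_qint[of 0] by metis
  then have "\<forall>n. poly (THE p. \<forall>n. poly p (qint n) = composition_sum a n) (qint n) = composition_sum a n"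
    by (rule theI')
  moreover have "(\<Sum>m\<in>{m. length m = length a \<and> sum_list m = n}. qq ^ (\<Sum>i<length a. a ! i * m ! i))
      = composition_sum a n" for n
    unfolding composition_sum_def by (intro sum.cong) (simp_all add: sum_list_map2_mult)
  ultimately show ?thesis
    unfolding Epoly_def by simp
qed

section \<open>Finite posets\<close>

locale finite_poset =
  fixes P :: "'a set" and le :: "'a \<Rightarrow> 'a \<Rightarrow> bool"
  assumes finite_carrier [simp]: "finite P"
    and partial_order: "partial_order_on' P le"
begin

lemma poset_refl: "x \<in> P \<Longrightarrow> le x x"
  and poset_antisym: "x \<in> P \<Longrightarrow> y \<in> P \<Longrightarrow> le x y \<Longrightarrow> le y x \<Longrightarrow> x = y"
  and poset_trans: "x \<in> P \<Longrightarrow> y \<in> P \<Longrightarrow> z \<in> P \<Longrightarrow> le x y \<Longrightarrow> le y z \<Longrightarrow> le x z"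
  using partial_order unfolding partial_order_on'_def by blast+

lemma card_interval_less_right:
  assumes "x \<in> P" "z \<in> P" "y \<in> P" "le x z" "le z y" "z \<noteq> y"
  shows "card {w\<in>P. le x w \<and> le w z} < card {w\<in>P. le x w \<and> le w y}"
proof (rule psubset_card_mono)
  have "{w\<in>P. le x w \<and> le w z} \<subseteq> {w\<in>P. le x w \<and> le w y}"
    using assms by (auto intro: poset_trans[of _ z y])
  moreover have "y \<in> {w\<in>P. le x w \<and> le w y} - {w\<in>P. le x w \<and> le w z}"
    using assms poset_antisym[of y z] poset_refl[of y] poset_trans[of x z y] by auto
  ultimately show "{w\<in>P. le x w \<and> le w z} \<subset> {w\<in>P. le x w \<and> le w y}"
    by blast
qed simp

lemma card_interval_less_left:
  assumes "x \<in> P" "z \<in> P" "y \<in> P" "le x z" "le z y" "x \<noteq> z"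
  shows "card {w\<in>P. le z w \<and> le w y} < card {w\<in>P. le x w \<and> le w y}"
proof (rule psubset_card_mono)
  have "{w\<in>P. le z w \<and> le w y} \<subseteq> {w\<in>P. le x w \<and> le w y}"
    using assms by (auto intro: poset_trans[of x z])
  moreover have "x \<in> {w\<in>P. le x w \<and> le w y} - {w\<in>P. le z w \<and> le w y}"
    using assms poset_antisym[of x z] poset_refl[of x] poset_trans[of x z y] by auto
  ultimately show "{w\<in>P. le z w \<and> le w y} \<subset> {w\<in>P. le x w \<and> le w y}"
    by blast
qed simp

end

text \<open>The guard makes the recursion well-founded for arbitrary arguments.\<close>

function mobius_rec :: "'a set \<Rightarrow> ('a \<Rightarrow> 'a \<Rightarrow> bool) \<Rightarrow> 'a \<Rightarrow> 'a \<Rightarrow> int" where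
  "mobius_rec P le x y =
     (if finite P \<and> partial_order_on' P le \<and> x \<in> P \<and> y \<in> P \<and> le x y then
        if x = y then 1 else - (\<Sum>z\<in>{z\<in>P. le x z \<and> le z y \<and> z \<noteq> y}. mobius_rec P le x z)
      else 0)"
  by auto
termination
proof (relation "measure (\<lambda>(P, le, x, y). card {w\<in>P. le x w \<and> le w y})")
  fix P :: "'a set" and le :: "'a \<Rightarrow> 'a \<Rightarrow> bool" and x y z :: 'a
  assume "finite P \<and> partial_order_on' P le \<and> x \<in> P \<and> y \<in> P \<and> le x y"
    and "z \<in> {z \<in> P. le x z \<and> le z y \<and> z \<noteq> y}"
  then show "((P, le, x, z), P, le, x, y) \<in> measure (\<lambda>(P, le, x, y). card {w\<in>P. le x w \<and> le w y})"
    by (simp, intro finite_poset.card_interval_less_right[OF finite_poset.intro]) auto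
qed simp

declare mobius_rec.simps [simp del]

lemma mobius_rec_eq_0: "\<not> (x \<in> P \<and> y \<in> P \<and> le x y) \<Longrightarrow> mobius_rec P le x y = 0"
  by (subst mobius_rec.simps) auto

context finite_poset
begin

lemma mobius_rec_sum:
  assumes "x \<in> P" "y \<in> P" "le x y"
  shows "(\<Sum>z\<in>{z\<in>P. le x z \<and> le z y}. mobius_rec P le x z) = (if x = y then 1 else 0)"
proof (cases "x = y")
  case True
  then have "{z\<in>P. le x z \<and> le z y} = {x}"
    using assms poset_refl poset_antisym[of _ y] by blast
  then show ?thesis
    using True assms by (simp add: mobius_rec.simps[of P le y y] partial_order)
next
  case False
  have "{z\<in>P. le x z \<and> le z y} = insert y {z\<in>P. le x z \<and> le z y \<and> z \<noteq> y}"
    using assms poset_refl[of y] by blast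
  then show ?thesis
    using False assms by (simp add: mobius_rec.simps[of P le x y] partial_order)
qed

lemma mobius_rec_unique:
  assumes sums: "\<And>x y. x \<in> P \<Longrightarrow> y \<in> P \<Longrightarrow> le x y \<Longrightarrow>
      (\<Sum>z\<in>{z\<in>P. le x z \<and> le z y}. f x z) = (if x = y then 1 else 0)"
    and "x \<in> P" "y \<in> P" "le x y"
  shows "f x y = mobius_rec P le x y"
  using assms(2-)
proof (induction "card {w\<in>P. le x w \<and> le w y}" arbitrary: y rule: less_induct)
  case less
  let ?I = "{z\<in>P. le x z \<and> le z y}"
  have "(\<Sum>z\<in>?I. f x z) = (\<Sum>z\<in>?I. mobius_rec P le x z)"
    using less.prems by (simp add: sums mobius_rec_sum)
  moreover have "(\<Sum>z\<in>?I - {y}. f x z) = (\<Sum>z\<in>?I - {y}. mobius_rec P le x z)"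
  proof (intro sum.cong refl)
    fix z
    assume "z \<in> ?I - {y}"
    with less.prems show "f x z = mobius_rec P le x z"
      by (intro less.hyps card_interval_less_right) auto
  qed
  moreover have "y \<in> ?I"
    using less.prems poset_refl by simp
  ultimately show ?case
    by (simp add: sum.remove)
qed

lemma mobius_eq_mobius_rec: "mobius P le = mobius_rec P le"
  unfolding mobius_def
proof (rule the_equality)
  show "(\<forall>x\<in>P. \<forall>y\<in>P. le x y \<longrightarrow>
      (\<Sum>z\<in>{z\<in>P. le x z \<and> le z y}. mobius_rec P le x z) = (if x = y then 1 else 0)) \<and>
    (\<forall>x y. \<not> (x \<in> P \<and> y \<in> P \<and> le x y) \<longrightarrow> mobius_rec P le x y = 0)"
    by (intro conjI ballI allI impI mobius_rec_sum mobius_rec_eq_0)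
next
  fix f :: "'a \<Rightarrow> 'a \<Rightarrow> int"
  assume f: "(\<forall>x\<in>P. \<forall>y\<in>P. le x y \<longrightarrow>
      (\<Sum>z\<in>{z\<in>P. le x z \<and> le z y}. f x z) = (if x = y then 1 else 0)) \<and>
    (\<forall>x y. \<not> (x \<in> P \<and> y \<in> P \<and> le x y) \<longrightarrow> f x y = 0)"
  show "f = mobius_rec P le"
  proof (intro ext)
    fix x y
    show "f x y = mobius_rec P le x y"
    proof (cases "x \<in> P \<and> y \<in> P \<and> le x y")
      case True
      with f show ?thesis
        by (intro mobius_rec_unique) auto
    next
      case False
      with f show ?thesis
        by (simp add: mobius_rec_eq_0)
    qed
  qed
qed

lemma mobius_sum:
  assumes "x \<in> P" "y \<in> P" "le x y"
  shows "(\<Sum>z\<in>{z\<in>P. le x z \<and> le z y}. mobius P le x z) = (if x = y then 1 else 0)"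
  using mobius_rec_sum[OF assms] by (simp add: mobius_eq_mobius_rec)

lemma sum_upset_upset:
  assumes "x \<in> P"
  shows "(\<Sum>z\<in>{z\<in>P. le x z}. \<Sum>w\<in>{w\<in>P. le z w}. F z w) =
         (\<Sum>w\<in>{w\<in>P. le x w}. \<Sum>z\<in>{z\<in>P. le x z \<and> le z w}. F z w)"
proof -
  have "{w\<in>P. le z w} = {w\<in>{w\<in>P. le x w}. le z w}" if "z \<in> {z\<in>P. le x z}" for z
    using assms that by (auto intro: poset_trans[of x z])
  then have "(\<Sum>z\<in>{z\<in>P. le x z}. \<Sum>w\<in>{w\<in>P. le z w}. F z w) =
      (\<Sum>z\<in>{z\<in>P. le x z}. \<Sum>w\<in>{w\<in>{w\<in>P. le x w}. le z w}. F z w)"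
    by (intro sum.cong) simp_all
  also have "\<dots> = (\<Sum>w\<in>{w\<in>P. le x w}. \<Sum>z\<in>{z\<in>{z\<in>P. le x z}. le z w}. F z w)"
    by (rule sum.swap_restrict) simp_all
  finally show ?thesis
    by simp
qed

definition up_sum :: "('a \<Rightarrow> qfield) \<Rightarrow> ('a \<Rightarrow> qfield) \<Rightarrow> 'a \<Rightarrow> qfield" where
  "up_sum c v x = (\<Sum>z\<in>{z\<in>P. le x z}. c z * v z)"

lemma up_sum_cong: "(\<And>z. z \<in> P \<Longrightarrow> u z = v z) \<Longrightarrow> up_sum c u x = up_sum c v x"
  unfolding up_sum_def by (intro sum.cong) simp_all

lemma up_sum_sum: "up_sum c (\<lambda>y. \<Sum>d\<in>D. f d y) x = (\<Sum>d\<in>D. up_sum c (f d) x)"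
  unfolding up_sum_def by (simp add: sum_distrib_left sum.swap[of _ D])

lemma up_sum_scale: "up_sum c (\<lambda>y. a * v y) x = a * up_sum c v x"
  unfolding up_sum_def by (simp add: sum_distrib_left mult_ac)

lemma up_sum_linear: "up_sum c (\<lambda>y. \<Sum>d\<in>D. f d * v d y) x = (\<Sum>d\<in>D. f d * up_sum c (v d) x)"
  by (simp add: up_sum_sum up_sum_scale)

lemma up_sum_diff: "up_sum c (\<lambda>y. u y - v y) x = up_sum c u x - up_sum c v x"
  unfolding up_sum_def by (simp add: algebra_simps sum_subtractf)

lemma funpow_up_sum_cong:
  "(\<And>z. z \<in> P \<Longrightarrow> u z = v z) \<Longrightarrow> x \<in> P \<Longrightarrow> (up_sum c ^^ m) u x = (up_sum c ^^ m) v x"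
proof (induction m arbitrary: x)
  case (Suc m)
  then show ?case
    by (simp only: funpow.simps o_apply) (rule up_sum_cong, blast)
qed simp

lemma funpow_up_sum_scale: "(up_sum c ^^ m) (\<lambda>y. a * v y) x = a * (up_sum c ^^ m) v x"
proof (induction m arbitrary: x)
  case (Suc m)
  then have "(up_sum c ^^ m) (\<lambda>y. a * v y) = (\<lambda>y. a * (up_sum c ^^ m) v y)"
    by (intro ext)
  then show ?case
    by (simp add: up_sum_scale)
qed simp

definition strict_chains :: "'a set \<Rightarrow> 'a list set" where
  "strict_chains T = {c. set c \<subseteq> T \<and> sorted_wrt (\<lambda>x y. le x y \<and> x \<noteq> y) c}"

lemma strict_chain_distinct: "c \<in> strict_chains T \<Longrightarrow> distinct c"
  unfolding strict_chains_def by (induction c) auto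

lemma finite_strict_chains: "finite T \<Longrightarrow> finite (strict_chains T)"
  by (rule finite_subset[OF _ finite_subset_distinct[of T]]) (auto simp: strict_chain_distinct,
      auto simp: strict_chains_def)

lemma strict_chains_Cons:
  "strict_chains T = insert [] ((\<lambda>(x, c). x # c) ` (SIGMA x:T. strict_chains {y\<in>T. le x y \<and> x \<noteq> y}))"
proof (intro set_eqI iffI)
  fix c
  assume c: "c \<in> strict_chains T"
  show "c \<in> insert [] ((\<lambda>(x, c). x # c) ` (SIGMA x:T. strict_chains {y\<in>T. le x y \<and> x \<noteq> y}))"
  proof (cases c)
    case (Cons a c')
    with c have "(a, c') \<in> (SIGMA x:T. strict_chains {y\<in>T. le x y \<and> x \<noteq> y})"
      by (auto simp: strict_chains_def)
    with Cons show ?thesis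
      by force
  qed simp
qed (auto simp: strict_chains_def)

lemma sum_strict_chains_Cons:
  assumes "finite T"
  shows "(\<Sum>c\<in>strict_chains T. f c) =
    f [] + (\<Sum>x\<in>T. \<Sum>c\<in>strict_chains {y\<in>T. le x y \<and> x \<noteq> y}. f (x # c))"
proof -
  let ?S = "SIGMA x:T. strict_chains {y\<in>T. le x y \<and> x \<noteq> y}"
  have fin: "finite ?S"
    using assms by (simp add: finite_strict_chains)
  have "inj_on (\<lambda>(x, c). x # c) ?S" "[] \<notin> (\<lambda>(x, c). x # c) ` ?S"
    by (auto intro: inj_onI)
  with fin have "(\<Sum>c\<in>strict_chains T. f c) = f [] + (\<Sum>(x, c)\<in>?S. f (x # c))"
    by (subst strict_chains_Cons) (simp add: sum.reindex case_prod_unfold comp_def)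
  also have "\<dots> = f [] + (\<Sum>x\<in>T. \<Sum>c\<in>strict_chains {y\<in>T. le x y \<and> x \<noteq> y}. f (x # c))"
    using assms by (simp add: sum.Sigma finite_strict_chains)
  finally show ?thesis .
qed

lemma strict_chains_minimum:
  assumes T: "T \<subseteq> P" "x \<in> T" "\<And>y. y \<in> T \<Longrightarrow> le x y"
  shows "strict_chains T = strict_chains (T - {x}) \<union> Cons x ` strict_chains (T - {x})"
proof (intro set_eqI iffI)
  fix c
  assume c: "c \<in> strict_chains T"
  show "c \<in> strict_chains (T - {x}) \<union> Cons x ` strict_chains (T - {x})"
  proof (cases "x \<in> set c")
    case True
    obtain a c' where a: "c = a # c'"
      using True by (cases c) auto
    have "a = x"
    proof (rule ccontr)
      assume "a \<noteq> x"
      with True a c have "le a x" "a \<in> T"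
        by (auto simp: strict_chains_def)
      with T \<open>a \<noteq> x\<close> show False
        using poset_antisym[of a x] by auto
    qed
    with a c show ?thesis
      by (auto simp: strict_chains_def)
  qed (use c in \<open>auto simp: strict_chains_def\<close>)
next
  fix c
  assume "c \<in> strict_chains (T - {x}) \<union> Cons x ` strict_chains (T - {x})"
  then show "c \<in> strict_chains T"
  proof
    assume "c \<in> Cons x ` strict_chains (T - {x})"
    then obtain c' where c': "c = x # c'" "c' \<in> strict_chains (T - {x})"
      by blast
    then have "\<forall>y\<in>set c'. le x y \<and> x \<noteq> y"
      using T(3) by (auto simp: strict_chains_def)
    with c' T(2) show ?thesis
      by (auto simp: strict_chains_def)
  qed (auto simp: strict_chains_def)
qed

lemma sum_strict_chains_minimum:
  assumes T: "T \<subseteq> P" "x \<in> T" "\<And>y. y \<in> T \<Longrightarrow> le x y"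
  shows "(\<Sum>c\<in>strict_chains T. f c) = (\<Sum>c\<in>strict_chains (T - {x}). f c + f (x # c))"
proof -
  have disjoint: "strict_chains (T - {x}) \<inter> Cons x ` strict_chains (T - {x}) = {}"
    by (auto simp: strict_chains_def)
  have finite: "finite (strict_chains (T - {x}))"
    using T(1) by (intro finite_strict_chains) (simp add: finite_subset)
  show ?thesis
    by (simp add: strict_chains_minimum[OF T] sum.union_disjoint[OF finite _ disjoint] finite
        sum.reindex sum.distrib)
qed

end

section \<open>Ranked posets\<close>

lemma funpow_eigen_sum:
  fixes T :: "('a \<Rightarrow> 'b::comm_semiring_1) \<Rightarrow> 'a \<Rightarrow> 'b"
  assumes cong: "\<And>u v x. (\<And>z. z \<in> S \<Longrightarrow> u z = v z) \<Longrightarrow> T u x = T v x"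
    and linear: "\<And>f x. T (\<lambda>y. \<Sum>d\<in>D. f d * V d y) x = (\<Sum>d\<in>D. f d * T (V d) x)"
    and eigen: "\<And>d x. x \<in> S \<Longrightarrow> T (V d) x = ev d * V d x"
    and decomp: "\<And>x. x \<in> S \<Longrightarrow> v x = (\<Sum>d\<in>D. V d x)"
    and "x \<in> S"
  shows "(T ^^ m) v x = (\<Sum>d\<in>D. ev d ^ m * V d x)"
  using \<open>x \<in> S\<close>
proof (induction m arbitrary: x)
  case 0
  then show ?case
    by (simp add: decomp)
next
  case (Suc m)
  have "(T ^^ Suc m) v x = T (\<lambda>y. \<Sum>d\<in>D. ev d ^ m * V d y) x"
    unfolding funpow.simps o_apply by (rule cong) (rule Suc.IH)
  also have "\<dots> = (\<Sum>d\<in>D. ev d ^ Suc m * V d x)"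
    using Suc.prems by (simp only: linear) (simp add: eigen mult_ac)
  finally show ?case .
qed

locale ranked_poset = finite_poset +
  fixes rk :: "'a \<Rightarrow> nat"
  assumes rank_cover: "covers P le x y \<Longrightarrow> rk y = rk x + 1"
begin

abbreviation qzeta_op :: "('a \<Rightarrow> qfield) \<Rightarrow> 'a \<Rightarrow> qfield" where
  "qzeta_op \<equiv> up_sum (\<lambda>z. qq ^ rk z)"

lemma rank_less:
  assumes "x \<in> P" "y \<in> P" "le x y" "x \<noteq> y"
  shows "rk x < rk y"
  using assms
proof (induction "card {z\<in>P. le x z \<and> le z y}" arbitrary: x y rule: less_induct)
  case less
  show ?case
  proof (cases "covers P le x y")
    case False
    then obtain z where z: "z \<in> P" "le x z" "le z y" "z \<noteq> x" "z \<noteq> y"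
      using less.prems unfolding covers_def by blast
    with less.prems have "rk x < rk z" "rk z < rk y"
      by (auto intro!: less.hyps card_interval_less_right card_interval_less_left)
    then show ?thesis
      by simp
  qed (simp add: rank_cover)
qed

lemma qzeta_op_rank_filtration:
  assumes v: "\<And>z. z \<in> P \<Longrightarrow> Suc r \<le> rk z \<Longrightarrow> v z = 0"
    and x: "x \<in> P" "r \<le> rk x"
  shows "qzeta_op v x = qq ^ r * v x"
proof -
  have "qzeta_op v x = (\<Sum>z\<in>{z\<in>P. le x z}. if z = x then qq ^ rk x * v x else 0)"
    unfolding up_sum_def using x by (intro sum.cong) (auto intro!: v dest: rank_less)
  also have "\<dots> = qq ^ rk x * v x"
    using x poset_refl[of x] by simp
  finally show ?thesis
    using v[of x] x by (cases "rk x = r") simp_all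
qed

text \<open>Induction on the rank bound \<open>r\<close>: \<open>qzeta_op v - q^r v\<close> vanishes from rank \<open>r\<close> on
  (\<open>qzeta_op_rank_filtration\<close>), and its eigencomponents of eigenvalue \<open>q^d\<close>, \<open>d < r\<close>, are
  rescaled by \<open>1/(q^d - q^r)\<close>.\<close>

lemma qzeta_op_eigen_decomposition:
  assumes "\<And>z. z \<in> P \<Longrightarrow> r \<le> rk z \<Longrightarrow> v z = 0"
  shows "\<exists>V. (\<forall>d. \<forall>x\<in>P. qzeta_op (V d) x = qq ^ d * V d x) \<and>
             (\<forall>x\<in>P. v x = (\<Sum>d<r. V d x))"
  using assms
proof (induction r arbitrary: v)
  case 0
  then show ?case
    by (intro exI[of _ "\<lambda>_ _. 0"]) (simp add: up_sum_def)
next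
  case (Suc r)
  have "\<And>z. z \<in> P \<Longrightarrow> r \<le> rk z \<Longrightarrow> qzeta_op v z - qq ^ r * v z = 0"
    using Suc.prems qzeta_op_rank_filtration by simp
  then obtain U where U: "\<And>d x. x \<in> P \<Longrightarrow> qzeta_op (U d) x = qq ^ d * U d x"
    and U_sum: "\<And>x. x \<in> P \<Longrightarrow> qzeta_op v x - qq ^ r * v x = (\<Sum>d<r. U d x)"
    using Suc.IH[of "\<lambda>z. qzeta_op v z - qq ^ r * v z"] by blast
  define W where "W d x = inverse (qq ^ d - qq ^ r) * U d x" for d x
  define V where "V d = (if d = r then (\<lambda>x. v x - (\<Sum>e<r. W e x)) else W d)" for d
  have W: "qzeta_op (W d) x = qq ^ d * W d x" if "x \<in> P" for d x
    using U[OF that] by (simp add: W_def[abs_def] up_sum_scale)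
  have "qzeta_op (V r) x = qq ^ r * V r x" if "x \<in> P" for x
  proof -
    have "qzeta_op (V r) x = qzeta_op v x - (\<Sum>e<r. qzeta_op (W e) x)"
      by (simp add: V_def up_sum_diff up_sum_sum)
    also have "(\<Sum>e<r. qzeta_op (W e) x) = (\<Sum>e<r. U e x) + qq ^ r * (\<Sum>e<r. W e x)"
      unfolding sum_distrib_left sum.distrib[symmetric]
      by (intro sum.cong) (simp_all add: W that W_def field_simps)
    finally show ?thesis
      using U_sum[OF that] by (simp add: V_def algebra_simps)
  qed
  then have "\<forall>d. \<forall>x\<in>P. qzeta_op (V d) x = qq ^ d * V d x"
    using W by (simp add: V_def)
  moreover have "\<forall>x\<in>P. v x = (\<Sum>d<Suc r. V d x)"
    by (simp add: V_def)
  ultimately show ?case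
    by blast
qed

lemma strict_chain_ranks_distinct:
  assumes "c \<in> strict_chains T" "T \<subseteq> P"
  shows "distinct (map rk c)"
proof -
  have "sorted_wrt (\<lambda>x y. rk x < rk y) c"
    using assms unfolding strict_chains_def
    by (auto intro: sorted_wrt_mono_rel[of _ "\<lambda>x y. le x y \<and> x \<noteq> y"] rank_less)
  then have "sorted_wrt (<) (map rk c)"
    by (simp add: sorted_wrt_map)
  then show ?thesis
    by (simp add: strict_sorted_iff)
qed

text \<open>The total weight of the multichains of length \<open>N\<close> whose set of elements is \<open>set c\<close>:
  their multiplicities form a composition of \<open>N\<close> into \<open>length c\<close> positive parts.\<close>

definition chain_weight :: "'a list \<Rightarrow> nat \<Rightarrow> qfield" where
  "chain_weight c N = (if length c \<le> N
     then qq ^ sum_list (map rk c) * composition_sum (map rk c) (N - length c) else 0)"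

lemma chain_weight_Nil: "chain_weight [] N = (if N = 0 then 1 else 0)"
  by (cases N) (simp_all add: chain_weight_def)

lemma chain_weight_Cons_0: "chain_weight (x # c) 0 = 0"
  by (simp add: chain_weight_def)

lemma chain_weight_Cons_Suc:
  "chain_weight (x # c) (Suc N) = qq ^ rk x * (chain_weight c N + chain_weight (x # c) N)"
proof (cases "length c \<le> N")
  case True
  then show ?thesis
  proof (cases "length c = N")
    case False
    with True have "N - length c = Suc (N - Suc (length c))"
      by simp
    then show ?thesis
      using True False by (simp add: chain_weight_def composition_sum_Cons_Suc algebra_simps power_add)
  qed (simp add: chain_weight_def power_add)
qed (simp add: chain_weight_def)

lemma funpow_qzeta_op_one:
  assumes "x \<in> P"
  shows "(qzeta_op ^^ N) (\<lambda>_. 1) x =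
    (\<Sum>c\<in>strict_chains {z\<in>P. le x z}. chain_weight c N)"
  using assms
proof (induction N arbitrary: x)
  case 0
  then show ?case
    by (simp add: sum_strict_chains_Cons chain_weight_Nil chain_weight_Cons_0)
next
  case (Suc N)
  let ?U = "\<lambda>x. {z\<in>P. le x z}"
  have "(qzeta_op ^^ Suc N) (\<lambda>_. 1) x = (\<Sum>z\<in>?U x. qq ^ rk z * (qzeta_op ^^ N) (\<lambda>_. 1) z)"
    by (simp add: up_sum_def[where v = "(qzeta_op ^^ N) (\<lambda>_. 1)"])
  also have "\<dots> = (\<Sum>z\<in>?U x. qq ^ rk z * (\<Sum>c\<in>strict_chains (?U z). chain_weight c N))"
    by (intro sum.cong) (simp_all add: Suc.IH)
  also have "\<dots> = (\<Sum>z\<in>?U x. \<Sum>c\<in>strict_chains {y\<in>?U x. le z y \<and> z \<noteq> y}.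
      chain_weight (z # c) (Suc N))"
  proof (intro sum.cong refl)
    fix z
    assume z: "z \<in> ?U x"
    then have "?U z - {z} = {y\<in>?U x. le z y \<and> z \<noteq> y}"
      using Suc.prems by (auto intro: poset_trans[of x z])
    moreover have "(\<Sum>c\<in>strict_chains (?U z). chain_weight c N) =
        (\<Sum>c\<in>strict_chains (?U z - {z}). chain_weight c N + chain_weight (z # c) N)"
      using z poset_refl[of z] by (intro sum_strict_chains_minimum) auto
    ultimately show "qq ^ rk z * (\<Sum>c\<in>strict_chains (?U z). chain_weight c N) =
        (\<Sum>c\<in>strict_chains {y\<in>?U x. le z y \<and> z \<noteq> y}. chain_weight (z # c) (Suc N))"
      by (simp add: chain_weight_Cons_Suc sum_distrib_left)
  qed
  also have "\<dots> = (\<Sum>c\<in>strict_chains (?U x). chain_weight c (Suc N))"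
    by (simp add: sum_strict_chains_Cons chain_weight_Nil)
  finally show ?case .
qed

lemma pchains_eq_strict_chains: "pchains T le k = {c\<in>strict_chains T. length c = k}"
  unfolding pchains_def strict_chains_def sorted_wrt_iff_nth_less by blast

lemma strict_chain_length_le:
  assumes "c \<in> strict_chains T" "finite T"
  shows "length c \<le> card T"
proof -
  have "length c = card (set c)"
    using assms(1) by (simp add: distinct_card strict_chain_distinct)
  also have "\<dots> \<le> card T"
    using assms by (intro card_mono) (auto simp: strict_chains_def)
  finally show ?thesis .
qed

lemma poly_qZeta_qint:
  assumes "card P \<le> N" "0 < N"
  shows "poly (qZeta P le rk) (qint (Suc N)) = (\<Sum>c\<in>strict_chains P. chain_weight c N)"
proof -
  have summand: "poly (smult (qq ^ (\<Sum>i<k. rk (c ! i))) (Epoly (map rk c) \<circ>\<^sub>p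
      [:- qint (k + 1) / qq ^ (k + 1), 1 / qq ^ (k + 1):])) (qint (Suc N)) = chain_weight c N"
    if "k \<in> {1..card P}" "c \<in> pchains P le k" for k c
  proof -
    have c: "c \<in> strict_chains P" "length c = k"
      using that(2) by (simp_all add: pchains_eq_strict_chains)
    with that(1) assms have "k \<le> N" "c \<noteq> []"
      by auto
    then have "(qint (Suc N) - qint (k + 1)) / qq ^ (k + 1) = qint (N - k)"
      using qint_diff_divide[of "k + 1" "Suc N"] by simp
    moreover have "(\<Sum>i<k. rk (c ! i)) = sum_list (map rk c)"
      using c by (simp add: sum_list_sum_nth atLeast0LessThan)
    ultimately show ?thesis
      using c \<open>k \<le> N\<close> \<open>c \<noteq> []\<close> strict_chain_ranks_distinct[of c P]
      by (simp add: poly_pcompose poly_Epoly_qint chain_weight_def diff_divide_distrib)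
  qed
  have "poly (qZeta P le rk) (qint (Suc N)) = (\<Sum>k\<in>{1..card P}. \<Sum>c\<in>pchains P le k. chain_weight c N)"
    unfolding qZeta_def poly_sum by (intro sum.cong refl summand)
  also have "\<dots> = (\<Sum>k\<le>card P. \<Sum>c\<in>{c\<in>strict_chains P. length c = k}. chain_weight c N)"
  proof -
    have "{..card P} = insert 0 {1..card P}"
      by auto
    moreover have "{c\<in>strict_chains P. length c = 0} = {[]}"
      by (auto simp: strict_chains_def)
    ultimately show ?thesis
      using assms by (simp add: pchains_eq_strict_chains chain_weight_Nil)
  qed
  also have "\<dots> = (\<Sum>c\<in>strict_chains P. chain_weight c N)"
    by (rule sum.group) (auto simp: finite_strict_chains strict_chain_length_le)
  finally show ?thesis .
qed

end

section \<open>Eulerian posets\<close>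

locale eulerian_poset =
  fixes P :: "'a set" and le :: "'a \<Rightarrow> 'a \<Rightarrow> bool" and zhat ohat :: 'a and rk :: "'a \<Rightarrow> nat"
  assumes eulerian: "eulerian P le zhat ohat rk"

sublocale eulerian_poset \<subseteq> ranked_poset P le rk
  using eulerian by unfold_locales (auto simp: eulerian_def)

context eulerian_poset
begin

abbreviation ohat_indicator :: "'a \<Rightarrow> qfield" where
  "ohat_indicator \<equiv> \<lambda>z. if z = ohat then 1 else 0"

lemma zhat_in: "zhat \<in> P"
  and ohat_in: "ohat \<in> P"
  and zhat_le: "x \<in> P \<Longrightarrow> le zhat x"
  and le_ohat: "x \<in> P \<Longrightarrow> le x ohat"
  and rank_zhat: "rk zhat = 0"
  and mobius_eulerian: "x \<in> P \<Longrightarrow> y \<in> P \<Longrightarrow> le x y \<Longrightarrow> mobius P le x y = (-1) ^ (rk y - rk x)"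
  using eulerian by (auto simp: eulerian_def)

lemma alternating_sum_interval:
  assumes "x \<in> P" "w \<in> P" "le x w"
  shows "(\<Sum>z\<in>{z\<in>P. le x z \<and> le z w}. (-1::qfield) ^ rk z) = (if x = w then (-1) ^ rk x else 0)"
proof -
  have "(-1::qfield) ^ rk z = (-1) ^ rk x * of_int (mobius P le x z)"
    if "z \<in> {z\<in>P. le x z \<and> le z w}" for z
  proof -
    from that assms have "rk x \<le> rk z"
      using rank_less[of x z] by (cases "x = z") auto
    then have "(-1::qfield) ^ rk z = (-1) ^ rk x * (-1) ^ (rk z - rk x)"
      by (simp flip: power_add)
    with that assms show ?thesis
      by (simp add: mobius_eulerian)
  qed
  then have "(\<Sum>z\<in>{z\<in>P. le x z \<and> le z w}. (-1::qfield) ^ rk z) =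
      (-1) ^ rk x * of_int (\<Sum>z\<in>{z\<in>P. le x z \<and> le z w}. mobius P le x z)"
    by (simp add: sum_distrib_left)
  with assms show ?thesis
    by (simp add: mobius_sum)
qed

definition qzeta_op_inv :: "('a \<Rightarrow> qfield) \<Rightarrow> 'a \<Rightarrow> qfield" where
  "qzeta_op_inv v x = up_sum (\<lambda>z. (-1) ^ rk z) v x / (- qq) ^ rk x"

lemma qzeta_op_inv_qzeta_op:
  assumes "x \<in> P"
  shows "qzeta_op_inv (qzeta_op v) x = v x"
proof -
  have "up_sum (\<lambda>z. (-1) ^ rk z) (qzeta_op v) x =
      (\<Sum>w\<in>{w\<in>P. le x w}. qq ^ rk w * v w * (\<Sum>z\<in>{z\<in>P. le x z \<and> le z w}. (-1) ^ rk z))"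
    unfolding up_sum_def sum_distrib_left sum_upset_upset[OF assms] by (simp only: mult_ac)
  also have "\<dots> = (\<Sum>w\<in>{w\<in>P. le x w}. if w = x then qq ^ rk x * v x * (-1) ^ rk x else 0)"
    using assms by (intro sum.cong refl) (simp add: alternating_sum_interval eq_commute)
  also have "\<dots> = ((-1) ^ rk x * qq ^ rk x) * v x"
    using assms poset_refl[of x] by (simp add: mult_ac)
  also have "\<dots> = (- qq) ^ rk x * v x"
    by (simp flip: power_mult_distrib)
  finally show ?thesis
    by (simp add: qzeta_op_inv_def)
qed

lemma qzeta_op_inv_cong: "(\<And>z. z \<in> P \<Longrightarrow> u z = v z) \<Longrightarrow> qzeta_op_inv u x = qzeta_op_inv v x"
  unfolding qzeta_op_inv_def by (metis up_sum_cong)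

lemma qzeta_op_inv_linear:
  "qzeta_op_inv (\<lambda>y. \<Sum>d\<in>D. f d * v d y) x = (\<Sum>d\<in>D. f d * qzeta_op_inv (v d) x)"
  by (simp add: qzeta_op_inv_def up_sum_linear sum_divide_distrib)

lemma qinv_subst_funpow_qzeta_op_inv:
  "qinv_subst ((qzeta_op_inv ^^ m) v x) =
     (- qq) ^ rk x * (qzeta_op ^^ m) (\<lambda>z. qinv_subst (v z) / (- qq) ^ rk z) x"
proof (induction m arbitrary: x)
  case (Suc m)
  let ?v = "\<lambda>z. qinv_subst (v z) / (- qq) ^ rk z"
  have "qinv_subst ((qzeta_op_inv ^^ Suc m) v x) =
      (\<Sum>z\<in>{z\<in>P. le x z}. (-1) ^ rk z * qinv_subst ((qzeta_op_inv ^^ m) v z)) * (- qq) ^ rk x"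
    by (simp add: qzeta_op_inv_def up_sum_def qinv_subst_divide qinv_subst_sum qinv_subst_mult
        qinv_subst_power qinv_subst_minus qinv_subst_inverse qinv_subst_qq divide_inverse
        flip: power_inverse)
  also have "\<dots> = (\<Sum>z\<in>{z\<in>P. le x z}. ((-1) ^ rk z * (- qq) ^ rk z) * (qzeta_op ^^ m) ?v z) * (- qq) ^ rk x"
    by (simp add: Suc.IH mult_ac)
  also have "\<dots> = (- qq) ^ rk x * (qzeta_op ^^ Suc m) ?v x"
    by (simp add: up_sum_def[where v = "(qzeta_op ^^ m) ?v"] mult_ac flip: power_mult_distrib)
  finally show ?case .
qed simp

lemma eigen_polynomial_exists:
  "\<exists>W. \<forall>m. poly W (qq ^ m) = (qzeta_op ^^ m) ohat_indicator zhat \<and>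
             poly W (inverse qq ^ m) = (qzeta_op_inv ^^ m) ohat_indicator zhat"
proof -
  let ?D = "{..<Suc (rk ohat)}"
  have "ohat_indicator z = 0" if "Suc (rk ohat) \<le> rk z" for z
    using that by auto
  then obtain V where A_eigen: "\<And>d x. x \<in> P \<Longrightarrow> qzeta_op (V d) x = qq ^ d * V d x"
    and decomp: "\<And>x. x \<in> P \<Longrightarrow> ohat_indicator x = (\<Sum>d\<in>?D. V d x)"
    using qzeta_op_eigen_decomposition[of "Suc (rk ohat)" ohat_indicator] by blast
  have B_eigen: "qzeta_op_inv (V d) x = inverse qq ^ d * V d x" if "x \<in> P" for d x
  proof -
    have "V d x = qzeta_op_inv (qzeta_op (V d)) x"
      using that by (simp add: qzeta_op_inv_qzeta_op)
    also have "\<dots> = qzeta_op_inv (\<lambda>y. qq ^ d * V d y) x"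
      by (rule qzeta_op_inv_cong) (simp add: A_eigen)
    also have "\<dots> = qq ^ d * qzeta_op_inv (V d) x"
      using qzeta_op_inv_linear[of "\<lambda>_. qq ^ d" "\<lambda>_. V d" "{()}"] by simp
    finally show ?thesis
      by (simp add: field_simps)
  qed
  define W where "W = (\<Sum>d\<in>?D. monom (V d zhat) d)"
  have "poly W u = (\<Sum>d\<in>?D. (u ^ d) * V d zhat)" for u
    by (simp add: W_def poly_sum poly_monom mult.commute)
  moreover have "(qzeta_op ^^ m) ohat_indicator zhat = (\<Sum>d\<in>?D. (qq ^ d) ^ m * V d zhat)" for m
    by (rule funpow_eigen_sum[where S = P, OF up_sum_cong up_sum_linear A_eigen decomp zhat_in])
  moreover have "(qzeta_op_inv ^^ m) ohat_indicator zhat = (\<Sum>d\<in>?D. (inverse qq ^ d) ^ m * V d zhat)"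
    for m
    by (rule funpow_eigen_sum[where S = P, OF qzeta_op_inv_cong qzeta_op_inv_linear B_eigen decomp
          zhat_in])
  ultimately show ?thesis
    by (intro exI[of _ W]) (simp add: mult.commute flip: power_mult)
qed

lemma qzeta_op_ohat_indicator: "x \<in> P \<Longrightarrow> qzeta_op ohat_indicator x = qq ^ rk ohat"
  unfolding up_sum_def using ohat_in le_ohat by (simp add: if_distrib[of "(*) _"] cong: if_cong)

lemma poly_qZeta_large_qint:
  assumes "card P < m"
  shows "poly (qZeta P le rk) (qint m) = (qzeta_op ^^ m) ohat_indicator zhat / qq ^ rk ohat"
proof -
  obtain N where N: "m = Suc N" "card P \<le> N"
    using assms by (metis less_eq_Suc_le Suc_le_D Suc_le_mono)
  moreover have "0 < N"
    using N zhat_in card_gt_0_iff[of P] by auto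
  moreover have "{z\<in>P. le zhat z} = P"
    using zhat_le by auto
  ultimately have "poly (qZeta P le rk) (qint m) = (qzeta_op ^^ N) (\<lambda>_. 1) zhat"
    by (simp add: poly_qZeta_qint funpow_qzeta_op_one zhat_in)
  moreover have "(qzeta_op ^^ m) ohat_indicator zhat = (qzeta_op ^^ N) (\<lambda>_. qq ^ rk ohat * 1) zhat"
    unfolding N(1) funpow_Suc_right o_apply
    by (rule funpow_up_sum_cong) (simp_all add: qzeta_op_ohat_indicator zhat_in)
  ultimately show ?thesis
    by (simp only: funpow_up_sum_scale) simp
qed

lemma poly_qZeta_qint_funpow:
  "poly (qZeta P le rk) (qint m) = (qzeta_op ^^ m) ohat_indicator zhat / qq ^ rk ohat"
  and poly_qZeta_neg_qint_funpow:
  "poly (qZeta P le rk) (neg_qint m) = (qzeta_op_inv ^^ m) ohat_indicator zhat / qq ^ rk ohat"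
proof -
  obtain W where W_pos: "\<And>m. poly W (qq ^ m) = (qzeta_op ^^ m) ohat_indicator zhat"
    and W_neg: "\<And>m. poly W (inverse qq ^ m) = (qzeta_op_inv ^^ m) ohat_indicator zhat"
    using eigen_polynomial_exists by blast
  have Z: "qZeta P le rk = smult (inverse (qq ^ rk ohat)) (W \<circ>\<^sub>p [:1, qq - 1:])"
    by (rule poly_eqI_qint[of "Suc (card P)"])
      (simp add: poly_qZeta_large_qint poly_pcompose poly_qint_altdef W_pos divide_inverse
        mult.commute del: poly_pCons)
  show "poly (qZeta P le rk) (qint m) = (qzeta_op ^^ m) ohat_indicator zhat / qq ^ rk ohat"
    by (simp add: Z poly_pcompose poly_qint_altdef W_pos divide_inverse mult.commute del: poly_pCons)
  show "poly (qZeta P le rk) (neg_qint m) = (qzeta_op_inv ^^ m) ohat_indicator zhat / qq ^ rk ohat"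
    by (simp add: Z poly_pcompose poly_neg_qint_altdef W_neg divide_inverse mult.commute
        del: poly_pCons)
qed

lemma qinv_subst_funpow_qzeta_op_inv_ohat:
  "qinv_subst ((qzeta_op_inv ^^ m) ohat_indicator zhat) =
     (qzeta_op ^^ m) ohat_indicator zhat / (- qq) ^ rk ohat"
proof -
  have "(\<lambda>z. qinv_subst (ohat_indicator z) / (- qq) ^ rk z) =
      (\<lambda>z. inverse ((- qq) ^ rk ohat) * ohat_indicator z)"
    by (auto simp: divide_inverse)
  then show ?thesis
    by (simp add: qinv_subst_funpow_qzeta_op_inv rank_zhat funpow_up_sum_scale divide_inverse
        mult.commute)
qed

end

theorem mainTheorem2:
  fixes P :: "'a set" and le :: "'a \<Rightarrow> 'a \<Rightarrow> bool" and zhat ohat :: 'a and rk :: "'a \<Rightarrow> nat"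
  assumes "eulerian P le zhat ohat rk"
  shows "qZeta P le rk =
           smult (inverse ((- qq) ^ rk ohat))
             (pcompose (map_poly qinv_subst (qZeta P le rk)) [: 0, - qq :])"
proof -
  interpret eulerian_poset P le zhat ohat rk
    using assms by (rule eulerian_poset.intro)
  let ?n = "rk ohat" and ?a = "\<lambda>m. (qzeta_op ^^ m) ohat_indicator zhat"
  have square: "(- qq) ^ ?n * (- qq) ^ ?n = qq ^ ?n * qq ^ ?n"
    by (simp flip: power_mult_distrib)
  have eval: "poly (smult (inverse ((- qq) ^ ?n)) (map_poly qinv_subst (qZeta P le rk) \<circ>\<^sub>p [:0, - qq:]))
      (qint m) = poly (qZeta P le rk) (qint m)" for m
  proof -
    have "poly (map_poly qinv_subst (qZeta P le rk)) (- qq * qint m) =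
        qinv_subst (poly (qZeta P le rk) (neg_qint m))"
      by (metis poly_map_poly_qinv_subst qinv_subst_neg_qint)
    also have "\<dots> = qq ^ ?n * ?a m / (- qq) ^ ?n"
      by (simp add: poly_qZeta_neg_qint_funpow qinv_subst_divide qinv_subst_funpow_qzeta_op_inv_ohat
          qinv_subst_power qinv_subst_qq field_simps)
    finally have "poly (smult (inverse ((- qq) ^ ?n)) (map_poly qinv_subst (qZeta P le rk) \<circ>\<^sub>p [:0, - qq:]))
        (qint m) = inverse ((- qq) ^ ?n) * (qq ^ ?n * ?a m / (- qq) ^ ?n)"
      by (simp add: poly_pcompose mult.commute)
    also have "\<dots> = ?a m / qq ^ ?n"
      using square by (simp add: field_simps)
    finally show ?thesis
      by (simp add: poly_qZeta_qint_funpow)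
  qed
  show ?thesis
    using poly_eqI_qint[of 0, OF eval] by (rule sym)
qed

end
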